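(* Let $G$ be a finite group. Then the co-prime graph $\Gamma_{CP}(G)$ is minimally connected if and only if $G$ is a $p$-group for some prime $p$.
   Context: The co-prime graph $\Gamma_{CP}(G)$ of a finite group $G$ is the simple undirected graph with vertex set $G$ in which two distinct elements $x,y$ are adjacent if and only if $\gcd(o(x),o(y))=1$. A $p$-group is a group of order $p^n$ for a prime $p$. For a connected graph $\Gamma$, a vertex cut-set is a set $S$ of vertices such that $\Gamma-S$ is disconnected or has just one vertex, and the vertex connectivity $\kappa(\Gamma)$ is the smallest size of a vertex cut-set. $\Gamma$ is minimally connected if $\kappa(\Gamma-\epsilon)=\kappa(\Gamma)-1$ for every edge $\epsilon$ of $\Gamma$. *)

theory Defs
  imports "HOL-Algebra.Algebra"
begin

text \<open>Simple graphs are given by a vertex set V and an adjacency predicate E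
  (only its restriction to V and to distinct vertices matters).\<close>

definition graph_rel :: "'a set \<Rightarrow> ('a \<Rightarrow> 'a \<Rightarrow> bool) \<Rightarrow> ('a \<times> 'a) set" where
  "graph_rel V E = {(a, b). a \<in> V \<and> b \<in> V \<and> a \<noteq> b \<and> E a b}"

definition graph_connected :: "'a set \<Rightarrow> ('a \<Rightarrow> 'a \<Rightarrow> bool) \<Rightarrow> bool" where
  "graph_connected V E \<longleftrightarrow> (\<forall>x\<in>V. \<forall>y\<in>V. (x, y) \<in> (graph_rel V E)\<^sup>*)"

definition vertex_cut :: "'a set \<Rightarrow> ('a \<Rightarrow> 'a \<Rightarrow> bool) \<Rightarrow> 'a set \<Rightarrow> bool" where
  "vertex_cut V E S \<longleftrightarrow> S \<subseteq> V \<and> (card (V - S) = 1 \<or> \<not> graph_connected (V - S) E)"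

definition vertex_connectivity :: "'a set \<Rightarrow> ('a \<Rightarrow> 'a \<Rightarrow> bool) \<Rightarrow> nat" where
  "vertex_connectivity V E = (LEAST k. \<exists>S. vertex_cut V E S \<and> card S = k)"

definition delete_edge :: "('a \<Rightarrow> 'a \<Rightarrow> bool) \<Rightarrow> 'a \<Rightarrow> 'a \<Rightarrow> ('a \<Rightarrow> 'a \<Rightarrow> bool)" where
  "delete_edge E x y = (\<lambda>a b. E a b \<and> {a, b} \<noteq> {x, y})"

definition minimally_connected :: "'a set \<Rightarrow> ('a \<Rightarrow> 'a \<Rightarrow> bool) \<Rightarrow> bool" where
  "minimally_connected V E \<longleftrightarrow>
     (\<forall>x\<in>V. \<forall>y\<in>V. x \<noteq> y \<and> E x y \<longrightarrow>
        vertex_connectivity V (delete_edge E x y) = vertex_connectivity V E - 1)"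

definition coprime_adj :: "('a, 'b) monoid_scheme \<Rightarrow> 'a \<Rightarrow> 'a \<Rightarrow> bool" where
  "coprime_adj G x y \<longleftrightarrow> x \<noteq> y \<and> gcd (group.ord G x) (group.ord G y) = 1"

definition is_p_group :: "('a, 'b) monoid_scheme \<Rightarrow> bool" where
  "is_p_group G \<longleftrightarrow> (\<exists>p n. Factorial_Ring.prime (p::nat) \<and> order G = p ^ n)"

end

theory Submission
  imports Defs
begin

text \<open>In a p-group every nontrivial element has order divisible by p, so the co-prime graph is a
  star centred at the identity: its connectivity is 1 and deleting any edge isolates a leaf.

  Conversely, the identity is adjacent to every other vertex, so minimal connectivity applied
  to the edge between the identity and x bounds the degree of x by the connectivity, which in
  turn is at most every degree: all nontrivial elements have the same degree. Comparing the
  degree of g with that of an element of prime order dividing ord g shows that every element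
  has prime-power order. Finally let primes p \<noteq> q divide the order of G. Conjugation by an
  element of order p has no fixed points among the elements of order divisible by q, nor among
  the nontrivial elements of order prime to p, since a fixed point would commute with it and
  yield an element of order divisible by two primes. Equal degrees force as many elements of
  order divisible by p as by q, hence the order of G is congruent to 1 modulo p.\<close>

definition neighbours :: "'a set \<Rightarrow> ('a \<Rightarrow> 'a \<Rightarrow> bool) \<Rightarrow> 'a \<Rightarrow> 'a set" where
  "neighbours V E x = {y \<in> V. y \<noteq> x \<and> E x y}"

lemma rtrancl_graph_rel_from_isolated:
  assumes "\<forall>z\<in>V. z \<noteq> v \<longrightarrow> \<not> E v z" and "(v, w) \<in> (graph_rel V E)\<^sup>*"
  shows "w = v"
  using assms(2)
proof (cases rule: converse_rtranclE)
  case (step z)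
  then show ?thesis using assms(1) by (auto simp: graph_rel_def)
qed simp

lemma vertex_cut_if_isolated:
  assumes "S \<subseteq> V" "v \<in> V - S" "\<forall>z\<in>V - S. z \<noteq> v \<longrightarrow> \<not> E v z"
  shows "vertex_cut V E S"
proof (cases "card (V - S) = 1")
  case False
  then have "V - S \<noteq> {v}" by auto
  then obtain w where "w \<in> V - S" "w \<noteq> v" using assms(2) by blast
  then have "\<not> graph_connected (V - S) E"
    using assms(2,3) rtrancl_graph_rel_from_isolated unfolding graph_connected_def by metis
  then show ?thesis using assms(1) by (simp add: vertex_cut_def)
qed (use assms(1) in \<open>simp add: vertex_cut_def\<close>)

lemma graph_connected_if_hub:
  assumes "h \<in> V" "\<forall>w\<in>V. (w, h) \<in> (graph_rel V E)\<^sup>* \<and> (h, w) \<in> (graph_rel V E)\<^sup>*"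
  shows "graph_connected V E"
  unfolding graph_connected_def using assms by (meson rtrancl_trans)

lemma graph_connected_if_dominating:
  assumes "h \<in> V" "\<forall>w\<in>V. w \<noteq> h \<longrightarrow> E h w \<and> E w h"
  shows "graph_connected V E"
proof (rule graph_connected_if_hub[OF assms(1)], intro ballI)
  fix w assume "w \<in> V"
  then show "(w, h) \<in> (graph_rel V E)\<^sup>* \<and> (h, w) \<in> (graph_rel V E)\<^sup>*"
    using assms by (cases "w = h") (auto simp: graph_rel_def intro: r_into_rtrancl)
qed

lemma vertex_connectivity_le:
  "vertex_cut V E S \<Longrightarrow> vertex_connectivity V E \<le> card S"
  unfolding vertex_connectivity_def by (rule Least_le) blast

lemma le_vertex_connectivity:
  assumes "V \<noteq> {}" "\<And>S. vertex_cut V E S \<Longrightarrow> k \<le> card S"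
  shows "k \<le> vertex_connectivity V E"
proof -
  obtain v where "v \<in> V" using assms(1) by auto
  then have "vertex_cut V E (V - {v})"
    unfolding vertex_cut_def by (simp add: Diff_Diff_Int Int_absorb1)
  then have "\<exists>k S. vertex_cut V E S \<and> card S = k" by (intro exI conjI) (assumption, rule refl)
  then have "\<exists>S. vertex_cut V E S \<and> card S = vertex_connectivity V E"
    unfolding vertex_connectivity_def by (rule LeastI_ex)
  then obtain S where "vertex_cut V E S" "card S = vertex_connectivity V E" by blast
  with assms(2) show ?thesis by force
qed

lemma one_le_vertex_connectivity:
  assumes "finite V" "V \<noteq> {}" "card V \<noteq> 1" "graph_connected V E"
  shows "1 \<le> vertex_connectivity V E"
proof (rule le_vertex_connectivity[OF assms(2)])
  fix S assume S: "vertex_cut V E S"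
  then have "S \<noteq> {}" using assms(3,4) by (auto simp: vertex_cut_def)
  moreover have "finite S" using S assms(1) by (auto simp: vertex_cut_def intro: finite_subset)
  ultimately show "1 \<le> card S" by (simp add: Suc_le_eq card_gt_0_iff)
qed

lemma vertex_connectivity_le_card_neighbours:
  "v \<in> V \<Longrightarrow> vertex_connectivity V E \<le> card (neighbours V E v)"
  by (intro vertex_connectivity_le vertex_cut_if_isolated) (auto simp: neighbours_def)

lemma vertex_cut_if_vertex_cut_delete_edge:
  assumes "vertex_cut V (delete_edge E h x) S" "h \<in> S \<or> x \<in> S"
  shows "vertex_cut V E S"
proof -
  have "graph_rel (V - S) (delete_edge E h x) = graph_rel (V - S) E"
    using assms(2) by (auto simp: graph_rel_def delete_edge_def doubleton_eq_iff)
  then show ?thesis using assms(1) by (simp add: vertex_cut_def graph_connected_def)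
qed

text \<open>Once the edge hx is deleted, x still reaches the dominating vertex h through any
  neighbour that survives, so a cut avoiding h and x must contain all other neighbours of x.\<close>

lemma neighbours_subset_vertex_cut_delete_edge:
  assumes "h \<in> V" "x \<in> V"
    and dominating: "\<forall>w\<in>V. w \<noteq> h \<longrightarrow> E h w \<and> E w h"
    and sym: "\<And>z. E x z \<Longrightarrow> E z x"
    and cut: "vertex_cut V (delete_edge E h x) S" and "h \<notin> S" "x \<notin> S" "x \<noteq> h"
  shows "neighbours V E x - {h} \<subseteq> S"
proof
  let ?R = "graph_rel (V - S) (delete_edge E h x)"
  fix z assume z: "z \<in> neighbours V E x - {h}"
  show "z \<in> S"
  proof (rule ccontr)
    assume "z \<notin> S"
    have to_h: "(w, h) \<in> ?R\<^sup>* \<and> (h, w) \<in> ?R\<^sup>*" if "w \<in> V - S" "w \<noteq> x" for w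
      using that assms(1,6) dominating
      by (cases "w = h")
        (auto simp: graph_rel_def delete_edge_def doubleton_eq_iff intro: r_into_rtrancl)
    have "(x, z) \<in> ?R\<^sup>* \<and> (z, x) \<in> ?R\<^sup>*"
      using z \<open>z \<notin> S\<close> assms(2,7) sym
      by (auto simp: graph_rel_def delete_edge_def doubleton_eq_iff neighbours_def
          intro: r_into_rtrancl)
    moreover have "(z, h) \<in> ?R\<^sup>* \<and> (h, z) \<in> ?R\<^sup>*"
      using to_h z \<open>z \<notin> S\<close> by (auto simp: neighbours_def)
    ultimately have "(x, h) \<in> ?R\<^sup>* \<and> (h, x) \<in> ?R\<^sup>*"
      by (meson rtrancl_trans)
    then have "graph_connected (V - S) (delete_edge E h x)"
      using to_h assms(1,6) by (intro graph_connected_if_hub[of h]) auto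
    moreover have "card (V - S) \<noteq> 1"
      using assms(1,2,6-8) by (metis DiffI card_1_singletonE singletonD)
    ultimately show False using cut by (simp add: vertex_cut_def)
  qed
qed

lemma min_le_vertex_connectivity_delete_edge:
  assumes "finite V" "h \<in> V" "x \<in> V" "x \<noteq> h"
    and dominating: "\<forall>w\<in>V. w \<noteq> h \<longrightarrow> E h w \<and> E w h"
    and sym: "\<And>z. E x z \<Longrightarrow> E z x"
  shows "min (vertex_connectivity V E) (card (neighbours V E x) - 1)
           \<le> vertex_connectivity V (delete_edge E h x)"
proof (rule le_vertex_connectivity)
  show "V \<noteq> {}" using assms(2) by blast
  fix S assume cut: "vertex_cut V (delete_edge E h x) S"
  show "min (vertex_connectivity V E) (card (neighbours V E x) - 1) \<le> card S"
  proof (cases "h \<in> S \<or> x \<in> S")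
    case True
    with cut have "vertex_cut V E S" by (rule vertex_cut_if_vertex_cut_delete_edge)
    then show ?thesis by (simp add: vertex_connectivity_le min.coboundedI1)
  next
    case False
    then have "neighbours V E x - {h} \<subseteq> S"
      using assms(2-4) dominating sym cut by (intro neighbours_subset_vertex_cut_delete_edge) auto
    moreover have "finite S"
      using cut assms(1) by (auto simp: vertex_cut_def intro: finite_subset)
    ultimately have "card (neighbours V E x) - 1 \<le> card S"
      by (metis card_Diff_singleton_if card_mono diff_le_self le_trans)
    then show ?thesis by (simp add: min.coboundedI2)
  qed
qed

lemma card_neighbours_le_vertex_connectivity:
  assumes mc: "minimally_connected V E"
    and "finite V" "card V \<noteq> 1" "h \<in> V" "x \<in> V" "x \<noteq> h"
    and dominating: "\<forall>w\<in>V. w \<noteq> h \<longrightarrow> E h w \<and> E w h"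
    and sym: "\<And>y z. E y z \<Longrightarrow> E z y"
  shows "card (neighbours V E x) \<le> vertex_connectivity V E"
proof -
  have "1 \<le> vertex_connectivity V E"
    using assms(2-4) dominating
    by (intro one_le_vertex_connectivity graph_connected_if_dominating) auto
  moreover have "vertex_connectivity V (delete_edge E h x) = vertex_connectivity V E - 1"
    using mc assms(4-6) dominating unfolding minimally_connected_def by auto
  moreover have "min (vertex_connectivity V E) (card (neighbours V E x) - 1)
                   \<le> vertex_connectivity V (delete_edge E h x)"
    using assms(2,4-6) dominating sym by (rule min_le_vertex_connectivity_delete_edge)
  ultimately show ?thesis by linarith
qed

lemma minimally_connected_if_star:
  assumes "finite V" "h \<in> V"
    and dominating: "\<forall>w\<in>V. w \<noteq> h \<longrightarrow> E h w \<and> E w h"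
    and star: "\<forall>x\<in>V. \<forall>y\<in>V. x \<noteq> y \<longrightarrow> E x y \<longrightarrow> x = h \<or> y = h"
  shows "minimally_connected V E"
  unfolding minimally_connected_def
proof (intro ballI impI)
  fix x y assume xy: "x \<in> V" "y \<in> V" "x \<noteq> y \<and> E x y"
  then obtain w where w: "w \<in> V" "w \<noteq> h" "{x, y} = {h, w}"
    using star by (metis insert_commute)
  have "vertex_cut V E {h}"
    using w star assms(2) by (intro vertex_cut_if_isolated[of _ _ w]) auto
  then have "vertex_connectivity V E \<le> 1"
    using vertex_connectivity_le by fastforce
  moreover have "1 \<le> vertex_connectivity V E"
  proof (rule one_le_vertex_connectivity)
    show "card V \<noteq> 1" using xy by (metis card_1_singletonE singletonD)
    show "graph_connected V E" using assms(2) dominating by (rule graph_connected_if_dominating)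
  qed (use assms(1,2) in auto)
  moreover have "vertex_cut V (delete_edge E x y) {}"
    using w star assms(2)
    by (intro vertex_cut_if_isolated[of _ _ w]) (auto simp: delete_edge_def insert_commute)
  then have "vertex_connectivity V (delete_edge E x y) = 0"
    using vertex_connectivity_le by fastforce
  ultimately show "vertex_connectivity V (delete_edge E x y) = vertex_connectivity V E - 1"
    by simp
qed

lemma (in group_action) card_orbit_eq_prime_order:
  assumes "Factorial_Ring.prime (order G)" "x \<in> E" "g \<in> carrier G" "\<phi> g x \<noteq> x"
  shows "card (orbit G \<phi> x) = order G"
proof -
  have "card (orbit G \<phi> x) \<noteq> 1"
  proof
    assume "card (orbit G \<phi> x) = 1"
    moreover have "x \<in> orbit G \<phi> x" using orbit_refl assms(2) .
    moreover have "\<phi> g x \<in> orbit G \<phi> x" using assms(3) by (auto simp: orbit_def)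
    ultimately show False using assms(4) by (metis card_1_singletonE singletonD)
  qed
  moreover have "card (orbit G \<phi> x) dvd order G"
    using orbit_stabilizer_theorem[OF assms(2)] by (metis dvd_triv_left)
  ultimately show ?thesis using assms(1) unfolding prime_nat_iff by blast
qed

lemma (in group_action) prime_order_dvd_card_if_fixpoint_free:
  assumes "finite E" "Factorial_Ring.prime (order G)" "A \<subseteq> E"
    and invariant: "\<And>g x. g \<in> carrier G \<Longrightarrow> x \<in> A \<Longrightarrow> \<phi> g x \<in> A"
    and fixpoint_free: "\<And>x. x \<in> A \<Longrightarrow> \<exists>g\<in>carrier G. \<phi> g x \<noteq> x"
  shows "order G dvd card A"
proof -
  interpret group G using group_hom group_hom.axioms(1) by blast
  define f where "f x = (if x \<in> A then 1 else 0 :: nat)" for x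
  have orbit_sum: "order G dvd (\<Sum>y\<in>B. f y)" if "B \<in> orbits G E \<phi>" for B
  proof -
    have "\<exists>x\<in>E. B = orbit G \<phi> x" using that unfolding orbits_def by auto
    then obtain x where x: "x \<in> E" and B: "B = orbit G \<phi> x" by blast
    have f_B: "f y = f x" if "y \<in> B" for y
    proof -
      have "\<exists>g\<in>carrier G. y = \<phi> g x" using that by (auto simp: B orbit_def)
      then obtain g where g: "g \<in> carrier G" "y = \<phi> g x" by blast
      then have "\<phi> (inv g) y = x" using orbit_sym_aux x by blast
      then show ?thesis using g invariant[of g x] invariant[of "inv g" y] by (auto simp: f_def)
    qed
    have "(\<Sum>y\<in>B. f y) = (\<Sum>y\<in>B. f x)" by (rule sum.cong[OF refl f_B])
    also have "\<dots> = card B * f x" by simp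
    also have "order G dvd \<dots>"
    proof (cases "x \<in> A")
      case True
      then obtain g where "g \<in> carrier G" "\<phi> g x \<noteq> x" using fixpoint_free by blast
      then show ?thesis using card_orbit_eq_prime_order assms(2) x B by simp
    qed (simp add: f_def)
    finally show ?thesis .
  qed
  have "card A = (\<Sum>x\<in>E. f x)"
    using assms(1,3) by (simp add: f_def sum.If_cases Int_absorb1)
  also have "\<dots> = (\<Sum>B\<in>orbits G E \<phi>. \<Sum>y\<in>B. f y)"
    using disjoint_sum[OF assms(1), of f] by simp
  finally show ?thesis using orbit_sum by (simp add: dvd_sum)
qed

locale finite_group = group +
  assumes finite_carrier: "finite (carrier G)"

lemma (in group) conjugate_pow:
  assumes "g \<in> carrier G" "x \<in> carrier G"
  shows "(g \<otimes> x \<otimes> inv g) [^] (n::nat) = g \<otimes> x [^] n \<otimes> inv g"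
proof (induction n)
  case 0
  then show ?case using assms by (simp add: r_inv)
next
  case (Suc n)
  have "(g \<otimes> x [^] n \<otimes> inv g) \<otimes> (g \<otimes> x \<otimes> inv g) = g \<otimes> (x [^] n \<otimes> x) \<otimes> inv g"
    using assms by (simp add: m_assoc flip: m_assoc[of "inv g" g])
  then show ?case using Suc by simp
qed

lemma (in group) ord_conjugate:
  assumes "g \<in> carrier G" "x \<in> carrier G"
  shows "ord (g \<otimes> x \<otimes> inv g) = ord x"
proof -
  have "g \<otimes> y \<otimes> inv g = \<one> \<longleftrightarrow> y = \<one>" if "y \<in> carrier G" for y
    using assms that
    by (metis conjugation_is_inj conjugation_is_surj inv_closed one_closed r_inv r_one)
  then have "(g \<otimes> x \<otimes> inv g) [^] n = \<one> \<longleftrightarrow> x [^] n = \<one>" for n :: nat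
    using assms by (simp add: conjugate_pow)
  then show ?thesis using assms by (simp add: ord_unique pow_eq_id)
qed

lemma (in group) ord_dvd_ord_mult_times_ord:
  assumes c: "c \<in> carrier G" and z: "z \<in> carrier G" and comm: "c \<otimes> z = z \<otimes> c"
  shows "ord c dvd ord (c \<otimes> z) * ord z"
proof -
  define k where "k = ord (c \<otimes> z) * ord z"
  have "(c \<otimes> z) [^] k = \<one>"
    using c z by (simp add: k_def nat_pow_pow[symmetric])
  moreover have "z [^] k = \<one>"
    using z by (simp add: k_def mult.commute[of "ord (c \<otimes> z)"] nat_pow_pow[symmetric])
  moreover have "(c \<otimes> z) [^] k = c [^] k \<otimes> z [^] k"
    using pow_mult_distrib[OF comm c z] .
  ultimately have "c [^] k = \<one>" using c by simp
  then show ?thesis using c by (simp add: k_def pow_eq_id)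
qed

lemma (in group) prime_dvd_ord_mult_if_commuting:
  assumes c: "c \<in> carrier G" and z: "z \<in> carrier G" and comm: "c \<otimes> z = z \<otimes> c"
    and p: "Factorial_Ring.prime (ord c)" and not_dvd: "\<not> ord c dvd ord z"
    and r: "Factorial_Ring.prime r" "r dvd ord z"
  shows "ord c dvd ord (c \<otimes> z) \<and> r dvd ord (c \<otimes> z)"
proof
  show "ord c dvd ord (c \<otimes> z)"
    using ord_dvd_ord_mult_times_ord[OF c z comm] p not_dvd by (simp add: prime_dvd_mult_iff)
  have "ord z dvd ord (c \<otimes> z) * ord c"
    using ord_dvd_ord_mult_times_ord[OF z c comm[symmetric]] comm by simp
  then have "r dvd ord (c \<otimes> z) * ord c" using r(2) dvd_trans by blast
  moreover have "\<not> r dvd ord c" using p r not_dvd by (metis primes_dvd_imp_eq)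
  ultimately show "r dvd ord (c \<otimes> z)" using r(1) by (simp add: prime_dvd_mult_iff)
qed

lemma (in finite_group) exists_ord_eq_prime:
  assumes r: "Factorial_Ring.prime r" and "r dvd order G"
  shows "\<exists>a\<in>carrier G. ord a = r"
proof -
  have "order G = r ^ 1 * (order G div r)" using assms(2) by simp
  then obtain H where H: "subgroup H G" "card H = r"
    using sylow_thm[OF r is_group _ finite_carrier] by (metis power_one_right)
  interpret K: group "G\<lparr>carrier := H\<rparr>" using subgroup_imp_group[OF H(1)] .
  have "\<not> H \<subseteq> {\<one>}"
    using H(2) prime_gt_1_nat[OF r] card_mono[of "{\<one>}" H] by auto
  then obtain x where x: "x \<in> H" "x \<noteq> \<one>" by blast
  have xG: "x \<in> carrier G" using x(1) subgroup.subset[OF H(1)] by blast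
  have "x [^]\<^bsub>G\<lparr>carrier := H\<rparr>\<^esub> order (G\<lparr>carrier := H\<rparr>) = \<one>\<^bsub>G\<lparr>carrier := H\<rparr>\<^esub>"
    using K.pow_order_eq_1 x(1) by simp
  then have "x [^] r = \<one>" using H nat_pow_consistent[of x r H] by (simp add: order_def)
  then have "ord x dvd r" using xG by (simp add: pow_eq_id)
  moreover have "ord x \<noteq> 1" using ord_eq_1 xG x(2) by blast
  ultimately have "ord x = r" using r unfolding prime_nat_iff by blast
  then show ?thesis using xG by blast
qed

text \<open>Conjugation by a, restricted to the cyclic group generated by a, acts on every set of
  elements defined by their orders; it has no fixed points there if a commutes with none of them.\<close>

lemma (in finite_group) prime_ord_dvd_card_if_not_commuting:
  assumes a: "a \<in> carrier G" and p: "Factorial_Ring.prime (ord a)"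
    and not_comm: "\<And>z. z \<in> carrier G \<Longrightarrow> P (ord z) \<Longrightarrow> a \<otimes> z \<noteq> z \<otimes> a"
  shows "ord a dvd card {z \<in> carrier G. P (ord z)}"
proof -
  define H where "H = generate G {a}"
  define \<phi> where "\<phi> = (\<lambda>g. \<lambda>x \<in> carrier G. g \<otimes> x \<otimes> inv g)"
  have H: "subgroup H G" using a by (simp add: H_def generate_is_subgroup)
  interpret K: group_action "G\<lparr>carrier := H\<rparr>" "carrier G" \<phi>
    unfolding \<phi>_def by (rule group_action.induced_action[OF action_by_conjugation H])
  have "order (G\<lparr>carrier := H\<rparr>) = ord a"
    using a by (simp add: order_def H_def generate_pow_card)
  moreover have "order (G\<lparr>carrier := H\<rparr>) dvd card {z \<in> carrier G. P (ord z)}"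
  proof (rule K.prime_order_dvd_card_if_fixpoint_free)
    fix g x assume "g \<in> carrier (G\<lparr>carrier := H\<rparr>)" "x \<in> {z \<in> carrier G. P (ord z)}"
    moreover have "g \<in> carrier G" using calculation(1) subgroup.subset[OF H] by auto
    ultimately show "\<phi> g x \<in> {z \<in> carrier G. P (ord z)}" by (simp add: \<phi>_def ord_conjugate)
  next
    fix x assume x: "x \<in> {z \<in> carrier G. P (ord z)}"
    have "a \<otimes> x \<otimes> inv a \<noteq> x"
      using not_comm[of x] x a by (metis inv_solve_right m_closed mem_Collect_eq)
    moreover have "a \<in> carrier (G\<lparr>carrier := H\<rparr>)" by (simp add: H_def generate.incl)
    ultimately show "\<exists>g\<in>carrier (G\<lparr>carrier := H\<rparr>). \<phi> g x \<noteq> x"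
      using x by (auto simp: \<phi>_def)
  qed (use finite_carrier p \<open>order (G\<lparr>carrier := H\<rparr>) = ord a\<close> in auto)
  ultimately show ?thesis by simp
qed

lemma prime_power_if_unique_prime_divisor:
  fixes n :: nat
  assumes "n \<noteq> 0"
    and unique: "\<And>p q. Factorial_Ring.prime p \<Longrightarrow> Factorial_Ring.prime q \<Longrightarrow>
                   p dvd n \<Longrightarrow> q dvd n \<Longrightarrow> p = q"
  shows "\<exists>p k. Factorial_Ring.prime p \<and> n = p ^ k"
proof (cases "n = 1")
  case True
  then show ?thesis by (intro exI[of _ 2] exI[of _ 0]) simp
next
  case False
  then obtain p where p: "Factorial_Ring.prime p" "p dvd n" using prime_factor_nat by blast
  obtain y where y: "n = p ^ multiplicity p n * y" "\<not> p dvd y"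
    using multiplicity_decompose'[of n p] assms(1) p(1) by (metis not_prime_unit)
  have "y = 1"
  proof (rule ccontr)
    assume "y \<noteq> 1"
    then obtain q where q: "Factorial_Ring.prime q" "q dvd y" using prime_factor_nat by blast
    then have "q dvd n" using y(1) by (metis dvd_mult)
    then show False using unique[OF p(1) q(1) p(2)] q(2) y(2) by simp
  qed
  then show ?thesis using p(1) y(1) by auto
qed

lemma (in group) coprime_adj_one:
  "\<forall>z\<in>carrier G. z \<noteq> \<one> \<longrightarrow> coprime_adj G \<one> z \<and> coprime_adj G z \<one>"
  by (auto simp: coprime_adj_def)

lemma coprime_adj_sym: "coprime_adj G x y \<Longrightarrow> coprime_adj G y x"
  by (auto simp: coprime_adj_def gcd.commute)

lemma (in group) neighbours_coprime_adj_ord_prime: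
  assumes "Factorial_Ring.prime (ord a)"
  shows "neighbours (carrier G) (coprime_adj G) a = {z \<in> carrier G. \<not> ord a dvd ord z}"
  using assms prime_imp_coprime[OF assms]
  by (auto simp: neighbours_def coprime_adj_def simp flip: coprime_iff_gcd_eq_1)

lemma (in group) not_coprime_adj_if_prime_power_order:
  assumes p: "Factorial_Ring.prime p" and order: "order G = p ^ n"
    and "x \<in> carrier G" "y \<in> carrier G" "x \<noteq> \<one>" "y \<noteq> \<one>"
  shows "\<not> coprime_adj G x y"
proof -
  have "p dvd ord u" if "u \<in> carrier G" "u \<noteq> \<one>" for u
  proof -
    have "ord u dvd p ^ n" using ord_dvd_group_order[OF that(1)] order by simp
    then obtain i where "ord u = p ^ i" using divides_primepow_nat[OF p] by blast
    moreover have "ord u \<noteq> 1" using ord_eq_1 that by blast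
    ultimately show ?thesis by (metis dvd_power gr0I power_0)
  qed
  then have "p dvd gcd (ord x) (ord y)" using assms(3-6) by simp
  then show ?thesis using p unfolding coprime_adj_def by (metis nat_dvd_1_iff_1 not_prime_1)
qed

abbreviation (in group) coprime_degree :: "'a \<Rightarrow> nat" where
  "coprime_degree x \<equiv> card (neighbours (carrier G) (coprime_adj G) x)"

locale coprime_regular_group = finite_group +
  assumes coprime_degree_le:
    "\<lbrakk>x \<in> carrier G; y \<in> carrier G; x \<noteq> \<one>; y \<noteq> \<one>\<rbrakk> \<Longrightarrow> coprime_degree x \<le> coprime_degree y"
begin

lemma prime_divisors_ord_eq:
  assumes g: "g \<in> carrier G" and r: "Factorial_Ring.prime r" "r dvd ord g"
    and s: "Factorial_Ring.prime s" "s dvd ord g"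
  shows "r = s"
proof (rule ccontr)
  assume "r \<noteq> s"
  let ?N = "neighbours (carrier G) (coprime_adj G)"
  have "ord g dvd order G" using g by (rule ord_dvd_group_order)
  then obtain a b where a: "a \<in> carrier G" "ord a = r" and b: "b \<in> carrier G" "ord b = s"
    using exists_ord_eq_prime[OF r(1)] exists_ord_eq_prime[OF s(1)] r(2) s(2)
    by (meson dvd_trans)
  have N_a: "?N a = {z \<in> carrier G. \<not> r dvd ord z}"
    using neighbours_coprime_adj_ord_prime[of a] a r(1) by simp
  have "?N g \<subseteq> ?N a"
  proof
    fix z assume "z \<in> ?N g"
    then have z: "z \<in> carrier G" "gcd (ord g) (ord z) = 1"
      by (auto simp: neighbours_def coprime_adj_def)
    have "\<not> r dvd ord z"
    proof
      assume "r dvd ord z"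
      then have "r dvd gcd (ord g) (ord z)" using r(2) by simp
      then show False using z(2) r(1) by simp
    qed
    then show "z \<in> ?N a" using N_a z(1) by simp
  qed
  moreover have "b \<in> ?N a"
    using N_a b primes_dvd_imp_eq[OF r(1) s(1)] \<open>r \<noteq> s\<close> by blast
  moreover have "b \<notin> ?N g"
    using b s by (auto simp: neighbours_def coprime_adj_def intro: not_prime_unit)
  ultimately have "coprime_degree g < coprime_degree a"
    using finite_carrier by (intro psubset_card_mono) (auto simp: neighbours_def)
  moreover have "a \<noteq> \<one>" "g \<noteq> \<one>" using a r by auto
  ultimately show False using coprime_degree_le[OF a(1) g] by simp
qed

lemma prime_ord_dvd_card_if_ords_prime_to:
  assumes a: "a \<in> carrier G" "Factorial_Ring.prime (ord a)"
    and P: "\<And>z. z \<in> carrier G \<Longrightarrow> P (ord z) \<Longrightarrow> ord z \<noteq> 1 \<and> \<not> ord a dvd ord z"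
  shows "ord a dvd card {z \<in> carrier G. P (ord z)}"
proof (rule prime_ord_dvd_card_if_not_commuting[OF a])
  fix z assume z: "z \<in> carrier G" "P (ord z)"
  then obtain r where r: "Factorial_Ring.prime r" "r dvd ord z"
    using P prime_factor_nat by blast
  show "a \<otimes> z \<noteq> z \<otimes> a"
  proof
    assume "a \<otimes> z = z \<otimes> a"
    then have "ord a dvd ord (a \<otimes> z) \<and> r dvd ord (a \<otimes> z)"
      using prime_dvd_ord_mult_if_commuting a z P r by blast
    then have "ord a = r" using prime_divisors_ord_eq a z r by blast
    then show False using P z r by simp
  qed
qed

lemma card_ord_multiples_eq:
  assumes a: "a \<in> carrier G" "Factorial_Ring.prime (ord a)"
    and b: "b \<in> carrier G" "Factorial_Ring.prime (ord b)"
  shows "card {z \<in> carrier G. ord a dvd ord z} = card {z \<in> carrier G. ord b dvd ord z}"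
proof -
  have card_N: "coprime_degree c = card (carrier G) - card {z \<in> carrier G. ord c dvd ord z}"
    if "Factorial_Ring.prime (ord c)" for c
  proof -
    have "{z \<in> carrier G. \<not> ord c dvd ord z} = carrier G - {z \<in> carrier G. ord c dvd ord z}"
      by blast
    then show ?thesis
      using neighbours_coprime_adj_ord_prime[OF that] finite_carrier by (simp add: card_Diff_subset)
  qed
  have "a \<noteq> \<one>" "b \<noteq> \<one>" using a b by auto
  then have "coprime_degree a = coprime_degree b"
    using coprime_degree_le a(1) b(1) by (intro antisym)
  moreover have "card {z \<in> carrier G. ord c dvd ord z} \<le> card (carrier G)" for c
    using finite_carrier by (intro card_mono) auto
  ultimately show ?thesis using card_N[OF a(2)] card_N[OF b(2)]
    by (metis diff_diff_cancel)
qed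

lemma is_p_group: "is_p_group G"
  unfolding is_p_group_def
proof (rule prime_power_if_unique_prime_divisor)
  show "order G \<noteq> 0" using finite_carrier by (simp add: order_gt_0_iff_finite[symmetric])
  fix p q :: nat
  assume p: "Factorial_Ring.prime p" "p dvd order G" and q: "Factorial_Ring.prime q" "q dvd order G"
  show "p = q"
  proof (rule ccontr)
    assume "p \<noteq> q"
    obtain a where a: "a \<in> carrier G" "ord a = p" using exists_ord_eq_prime p by blast
    obtain b where b: "b \<in> carrier G" "ord b = q" using exists_ord_eq_prime q by blast
    define D where "D = {z \<in> carrier G. p dvd ord z}"
    define N where "N = {z \<in> carrier G. ord z \<noteq> 1 \<and> \<not> p dvd ord z}"
    have "ord z \<noteq> 1 \<and> \<not> p dvd ord z" if "z \<in> carrier G" "q dvd ord z" for z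
      using that q(1) prime_divisors_ord_eq[OF that(1) p(1) _ q(1)] \<open>p \<noteq> q\<close> by auto
    then have "p dvd card {z \<in> carrier G. q dvd ord z}"
      using prime_ord_dvd_card_if_ords_prime_to[of a "\<lambda>n. q dvd n"] a p(1) by simp
    then have "p dvd card D"
      using card_ord_multiples_eq[of a b] a b p(1) q(1) by (simp add: D_def)
    moreover have "p dvd card N"
      using prime_ord_dvd_card_if_ords_prime_to[of a "\<lambda>n. n \<noteq> 1 \<and> \<not> p dvd n"] a p(1)
      by (simp add: N_def)
    moreover have "card (carrier G) = Suc (card D + card N)"
    proof -
      have "carrier G = insert \<one> (D \<union> N)" "\<one> \<notin> D \<union> N" "D \<inter> N = {}"
        using p(1) ord_eq_1 by (auto simp: D_def N_def)
      moreover have "finite D" "finite N" using finite_carrier by (simp_all add: D_def N_def)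
      ultimately show ?thesis by (simp add: card_Un_disjoint)
    qed
    moreover have "p dvd card (carrier G)" using p(2) by (simp add: order_def)
    ultimately have "p dvd card D + card N" "p dvd (card D + card N) + 1" by simp_all
    then have "p dvd 1" using dvd_add_right_iff by blast
    then show False using p(1) by simp
  qed
qed

end

lemma (in finite_group) coprime_regular_group_if_minimally_connected:
  assumes mc: "minimally_connected (carrier G) (coprime_adj G)" and "card (carrier G) \<noteq> 1"
  shows "coprime_regular_group G"
proof
  fix x y assume "x \<in> carrier G" "y \<in> carrier G" "x \<noteq> \<one>"
  then have "coprime_degree x \<le> vertex_connectivity (carrier G) (coprime_adj G)"
    using coprime_adj_sym
    by (intro card_neighbours_le_vertex_connectivity[OF mc finite_carrier assms(2) one_closed
          _ _ coprime_adj_one])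
  also have "\<dots> \<le> coprime_degree y"
    using \<open>y \<in> carrier G\<close> by (rule vertex_connectivity_le_card_neighbours)
  finally show "coprime_degree x \<le> coprime_degree y" .
qed

lemma (in finite_group) minimally_connected_if_p_group:
  assumes "is_p_group G"
  shows "minimally_connected (carrier G) (coprime_adj G)"
proof -
  obtain p n where "Factorial_Ring.prime p" "order G = p ^ n"
    using assms by (auto simp: is_p_group_def)
  then show ?thesis
    using not_coprime_adj_if_prime_power_order
    by (intro minimally_connected_if_star[OF finite_carrier one_closed coprime_adj_one]) blast
qed

theorem mainTheorem13:
  fixes G :: "('a, 'b) monoid_scheme"
  assumes "group G" and "finite (carrier G)"
  shows "minimally_connected (carrier G) (coprime_adj G) \<longleftrightarrow> is_p_group G"
proof -
  interpret finite_group G using assms by (simp add: finite_group_def finite_group_axioms_def)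
  show ?thesis
  proof
    assume mc: "minimally_connected (carrier G) (coprime_adj G)"
    show "is_p_group G"
    proof (cases "card (carrier G) = 1")
      case True
      then show ?thesis unfolding is_p_group_def order_def by (intro exI[of _ 2] exI[of _ 0]) simp
    next
      case False
      then interpret coprime_regular_group G
        using mc by (intro coprime_regular_group_if_minimally_connected)
      show ?thesis by (rule is_p_group)
    qed
  qed (rule minimally_connected_if_p_group)
qed

end
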